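(* For every $n\ge1$ and $k\ge1$ there is a deterministic protocol in the Robertson–Webb query model that runs in $k$ rounds and, for every instance with $n$ players, computes a proportional allocation in which every player receives a single interval, using a total of $O(k\,n^{1+1/k})$ queries.
   Context: Cake cutting: the cake is $[0,1]$; there are $n$ players, each with a private valuation $V_i(I)=\int_I v_i(x)\,dx$ given by a non-negative integrable density $v_i$, normalized so $V_i([0,1])=1$. An allocation is a partition of $[0,1]$ into pieces $A_1,\ldots,A_n$, player $i$ receiving $A_i$; it is proportional if $V_i(A_i)\ge1/n$ for all $i$. Robertson–Webb queries: $\mathrm{Cut}_i(\alpha)$ returns a point $y$ with $V_i([0,y])=\alpha$ (leftmost such point), which becomes a cut point; $\mathrm{Eval}_i(y)$ returns $V_i([0,y])$ for a previously obtained cut point $y$. The output allocation must be demarcated by cut points obtained through queries. A protocol runs in $k$ rounds if in each round it issues a set of queries (to any players) chosen depending only on answers from earlier rounds, then receives all answers. *)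

theory Defs
  imports "HOL-Analysis.Analysis"
begin

text \<open>Cake = [0,1]. Player i has density vs i; V_i([0,y]) = integral {0..y} (vs i).\<close>

definition valid_instance :: "nat \<Rightarrow> (nat \<Rightarrow> real \<Rightarrow> real) \<Rightarrow> bool" where
  "valid_instance n vs \<longleftrightarrow>
     (\<forall>i<n. (\<forall>x\<in>{0..1}. 0 \<le> vs i x) \<and> vs i integrable_on {0..1}
            \<and> integral {0..1} (vs i) = 1)"

definition cut_point :: "(real \<Rightarrow> real) \<Rightarrow> real \<Rightarrow> real" where
  "cut_point v \<alpha> = Inf {y \<in> {0..1}. integral {0..y} v = \<alpha>}"

datatype query = Cut nat real | Eval nat real

fun is_cut :: "query \<Rightarrow> bool" where
  "is_cut (Cut _ _) = True"
| "is_cut (Eval _ _) = False"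

fun answer :: "(nat \<Rightarrow> real \<Rightarrow> real) \<Rightarrow> query \<Rightarrow> real" where
  "answer vs (Cut i \<alpha>) = cut_point (vs i) \<alpha>"
| "answer vs (Eval i y) = integral {0..y} (vs i)"

text \<open>A deterministic protocol: a function choosing the queries of the next round from the
  answers of all earlier rounds (a history: list of rounds, each a list of answers), and an
  output function mapping the final history to an interval [fst, snd] per player.\<close>
type_synonym history = "real list list"
type_synonym query_fn = "history \<Rightarrow> query list"
type_synonym output_fn = "history \<Rightarrow> nat \<Rightarrow> real \<times> real"

fun transcript :: "query_fn \<Rightarrow> (query \<Rightarrow> real) \<Rightarrow> nat \<Rightarrow> history" where
  "transcript Q ans 0 = []"
| "transcript Q ans (Suc r) = (let h = transcript Q ans r in h @ [map ans (Q h)])"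

definition cut_points :: "query_fn \<Rightarrow> history \<Rightarrow> real set" where
  "cut_points Q h = {0, 1} \<union>
     (\<Union>j<length h. {y. \<exists>q. (q, y) \<in> set (zip (Q (take j h)) (h ! j)) \<and> is_cut q})"

fun valid_query :: "nat \<Rightarrow> real set \<Rightarrow> query \<Rightarrow> bool" where
  "valid_query n C (Cut i \<alpha>) \<longleftrightarrow> i < n \<and> 0 \<le> \<alpha> \<and> \<alpha> \<le> 1"
| "valid_query n C (Eval i y) \<longleftrightarrow> i < n \<and> y \<in> C"

definition valid_run :: "nat \<Rightarrow> nat \<Rightarrow> query_fn \<Rightarrow> (nat \<Rightarrow> real \<Rightarrow> real) \<Rightarrow> bool" where
  "valid_run n k Q vs \<longleftrightarrow>
     (\<forall>r<k. let h = transcript Q (answer vs) r in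
        \<forall>q\<in>set (Q h). valid_query n (cut_points Q h) q)"

definition num_queries :: "nat \<Rightarrow> query_fn \<Rightarrow> (nat \<Rightarrow> real \<Rightarrow> real) \<Rightarrow> nat" where
  "num_queries k Q vs = (\<Sum>r<k. length (Q (transcript Q (answer vs) r)))"

definition proportional_interval_allocation ::
  "nat \<Rightarrow> (nat \<Rightarrow> real \<Rightarrow> real) \<Rightarrow> real set \<Rightarrow> (nat \<Rightarrow> real \<times> real) \<Rightarrow> bool" where
  "proportional_interval_allocation n vs C A \<longleftrightarrow>
     (\<forall>i<n. fst (A i) \<le> snd (A i) \<and> fst (A i) \<in> C \<and> snd (A i) \<in> C) \<and>
     (\<Union>i<n. {fst (A i)..snd (A i)}) = {0..1} \<and>
     (\<forall>i<n. \<forall>j<n. i \<noteq> j \<longrightarrow> {fst (A i)<..<snd (A i)} \<inter> {fst (A j)<..<snd (A j)} = {}) \<and>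
     (\<forall>i<n. integral {fst (A i)..snd (A i)} (vs i) \<ge> 1 / real n)"

end

theory Submission
  imports Defs
begin

(* Let m = ceil(n powr (1/k)), so that n <= m^k.  After round r the players are partitioned
   into groups; group G is responsible for a block of m^(k-r) consecutive shares of size 1/n
   and owns a stretch [L G, L (G+1)] of the cake such that each member values [0, L G] at
   most at the start of the block and [0, L (G+1)] at least at its end.  In the next round
   every player cuts the cake at the ends of the m sub-blocks, and the group is split
   greedily from the left: sub-block t goes to the remaining players whose t-th cut is
   leftmost, and the new boundary is the rightmost of their cuts.  Every player not yet
   served has her t-th cut to the right of that boundary, so the invariant survives.  After
   k rounds every block is a single share held by a single player.  Each round costs
   n m <= 2 n^(1+1/k) Cut queries. *)

section \<open>Prefix valuations and cut points\<close>

definition prefix_value :: "(real \<Rightarrow> real) \<Rightarrow> real \<Rightarrow> real" where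
  "prefix_value v y = integral {0..y} v"

definition cake_density :: "(real \<Rightarrow> real) \<Rightarrow> bool" where
  "cake_density v \<longleftrightarrow> (\<forall>x\<in>{0..1}. 0 \<le> v x) \<and> v integrable_on {0..1} \<and> integral {0..1} v = 1"

lemma cake_density_of_valid_instance: "valid_instance n vs \<Longrightarrow> i < n \<Longrightarrow> cake_density (vs i)"
  unfolding valid_instance_def cake_density_def by blast

context
  fixes v :: "real \<Rightarrow> real"
  assumes v: "cake_density v"
begin

lemma cake_density_integrable: "0 \<le> a \<Longrightarrow> b \<le> 1 \<Longrightarrow> v integrable_on {a..b}"
  using v unfolding cake_density_def by (metis atLeastatMost_subset_iff integrable_on_subinterval)

lemma integral_eq_prefix_value_diff:
  assumes "0 \<le> a" "a \<le> b" "b \<le> 1"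
  shows "integral {a..b} v = prefix_value v b - prefix_value v a"
  using Henstock_Kurzweil_Integration.integral_combine[OF assms(1,2) cake_density_integrable[of 0 b]] assms
  unfolding prefix_value_def by simp

lemma prefix_value_mono:
  assumes "0 \<le> a" "a \<le> b" "b \<le> 1"
  shows "prefix_value v a \<le> prefix_value v b"
proof -
  have "0 \<le> integral {a..b} v"
    using v assms by (intro integral_nonneg cake_density_integrable) (auto simp: cake_density_def)
  then show ?thesis using integral_eq_prefix_value_diff[OF assms] by simp
qed

lemma prefix_value_one: "prefix_value v 1 = 1"
  using v by (simp add: prefix_value_def cake_density_def)

lemma continuous_on_prefix_value: "continuous_on {0..1} (prefix_value v)"
  using v unfolding prefix_value_def cake_density_def by (blast intro: indefinite_integral_continuous_1)

lemma prefix_value_attains: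
  assumes "0 \<le> \<alpha>" "\<alpha> \<le> prefix_value v y" "0 \<le> y" "y \<le> 1"
  obtains x where "0 \<le> x" "x \<le> y" "prefix_value v x = \<alpha>"
proof -
  have "continuous_on {0..y} (prefix_value v)"
    using continuous_on_prefix_value by (rule continuous_on_subset) (use assms in auto)
  with IVT'[of "prefix_value v" 0 \<alpha> y] assms show ?thesis
    using that by (auto simp: prefix_value_def)
qed

lemma
  assumes "0 \<le> \<alpha>" "\<alpha> \<le> 1"
  shows cut_point_nonneg: "0 \<le> cut_point v \<alpha>"
    and cut_point_le_one: "cut_point v \<alpha> \<le> 1"
    and prefix_value_cut_point: "prefix_value v (cut_point v \<alpha>) = \<alpha>"
proof -
  let ?S = "{y \<in> {0..1}. integral {0..y} v = \<alpha>}"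
  obtain x where "0 \<le> x" "x \<le> 1" "prefix_value v x = \<alpha>"
    using prefix_value_attains[of \<alpha> 1] assms prefix_value_one by auto
  then have "?S \<noteq> {}" by (auto simp: prefix_value_def)
  moreover have "closed ?S"
    using continuous_closed_preimage_constant[OF continuous_on_prefix_value, of \<alpha>]
    by (simp add: prefix_value_def)
  ultimately have "Inf ?S \<in> ?S"
    by (intro closed_contains_Inf) (auto intro: bdd_belowI[of _ 0])
  then show "0 \<le> cut_point v \<alpha>" "cut_point v \<alpha> \<le> 1" "prefix_value v (cut_point v \<alpha>) = \<alpha>"
    unfolding cut_point_def prefix_value_def by auto
qed

lemma cut_point_le:
  assumes "0 \<le> \<alpha>" "\<alpha> \<le> prefix_value v y" "0 \<le> y" "y \<le> 1"
  shows "cut_point v \<alpha> \<le> y"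
proof -
  obtain x where x: "0 \<le> x" "x \<le> y" "prefix_value v x = \<alpha>"
    using prefix_value_attains assms by blast
  then have "cut_point v \<alpha> \<le> x"
    unfolding cut_point_def using assms
    by (intro cInf_lower bdd_belowI[of _ 0]) (auto simp: prefix_value_def)
  with x show ?thesis by simp
qed

end

section \<open>Greedy splitting of a group\<close>

text \<open>The choice operator fixes one selection once and for all, so a protocol using it stays a
  deterministic function of the answers it has seen.\<close>

definition lowest :: "('a \<Rightarrow> 'b::linorder) \<Rightarrow> nat \<Rightarrow> 'a set \<Rightarrow> 'a set" where
  "lowest f c R = (SOME S. S \<subseteq> R \<and> card S = c \<and> (\<forall>i\<in>S. \<forall>j\<in>R - S. f i \<le> f j))"

lemma exists_lowest_subset:
  fixes f :: "'a \<Rightarrow> 'b::linorder"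
  assumes "finite R" "c \<le> card R"
  shows "\<exists>S\<subseteq>R. card S = c \<and> (\<forall>i\<in>S. \<forall>j\<in>R - S. f i \<le> f j)"
  using assms(2)
proof (induction c)
  case 0
  show ?case by (intro exI[of _ "{}"]) auto
next
  case (Suc c)
  then obtain S where S: "S \<subseteq> R" "card S = c" "\<forall>i\<in>S. \<forall>j\<in>R - S. f i \<le> f j"
    by auto
  have fin: "finite (R - S)" and ne: "R - S \<noteq> {}"
    using assms(1) S Suc.prems by auto
  let ?j = "arg_min_on f (R - S)"
  have min: "?j \<in> R - S" "\<forall>j\<in>R - S. f ?j \<le> f j"
    using arg_min_if_finite(1)[OF fin ne] arg_min_least[OF fin ne] by auto
  have "card (insert ?j S) = Suc c"
    using min(1) S(2) finite_subset[OF S(1) assms(1)] by simp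
  moreover have "\<forall>i\<in>insert ?j S. \<forall>j\<in>R - insert ?j S. f i \<le> f j"
    using min(2) S(3) by blast
  moreover have "insert ?j S \<subseteq> R"
    using min(1) S(1) by blast
  ultimately show ?case by blast
qed

lemma
  fixes f :: "'a \<Rightarrow> 'b::linorder"
  assumes "finite R" "c \<le> card R"
  shows lowest_subset: "lowest f c R \<subseteq> R"
    and card_lowest: "card (lowest f c R) = c"
    and lowest_le: "i \<in> lowest f c R \<Longrightarrow> j \<in> R - lowest f c R \<Longrightarrow> f i \<le> f j"
  using someI_ex[OF exists_lowest_subset[OF assms, of f]] unfolding lowest_def by blast+

primrec remaining :: "('a \<Rightarrow> nat \<Rightarrow> real) \<Rightarrow> (nat \<Rightarrow> nat) \<Rightarrow> 'a set \<Rightarrow> nat \<Rightarrow> 'a set" where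
  "remaining x c P 0 = P"
| "remaining x c P (Suc t) = remaining x c P t - lowest (\<lambda>i. x i t) (c t) (remaining x c P t)"

definition chosen :: "('a \<Rightarrow> nat \<Rightarrow> real) \<Rightarrow> (nat \<Rightarrow> nat) \<Rightarrow> 'a set \<Rightarrow> nat \<Rightarrow> 'a set" where
  "chosen x c P t = lowest (\<lambda>i. x i t) (c t) (remaining x c P t)"

lemma remaining_Suc: "remaining x c P (Suc t) = remaining x c P t - chosen x c P t"
  by (simp add: chosen_def)

declare remaining.simps(2)[simp del]

primrec split_point :: "('a \<Rightarrow> nat \<Rightarrow> real) \<Rightarrow> (nat \<Rightarrow> nat) \<Rightarrow> 'a set \<Rightarrow> real \<Rightarrow> nat \<Rightarrow> real" where
  "split_point x c P a 0 = a"
| "split_point x c P a (Suc t) = Max (insert (split_point x c P a t) ((\<lambda>i. x i t) ` chosen x c P t))"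

definition part_index :: "('a \<Rightarrow> nat \<Rightarrow> real) \<Rightarrow> (nat \<Rightarrow> nat) \<Rightarrow> 'a set \<Rightarrow> 'a \<Rightarrow> nat" where
  "part_index x c P i = (LEAST t. i \<in> chosen x c P t)"

locale greedy_split =
  fixes x :: "'a \<Rightarrow> nat \<Rightarrow> real" and c :: "nat \<Rightarrow> nat" and P :: "'a set" and m :: nat
  assumes finite_P: "finite P" and card_P: "card P = (\<Sum>t<m. c t)"
begin

abbreviation "R \<equiv> remaining x c P"
abbreviation "S \<equiv> chosen x c P"

lemma remaining_antimono: "s \<le> t \<Longrightarrow> R t \<subseteq> R s"
  by (induction t rule: dec_induct) (auto simp: remaining_Suc)

lemma finite_remaining: "finite (R t)"
  using remaining_antimono[of 0 t] finite_P by (auto intro: finite_subset)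

lemma card_remaining: "t \<le> m \<Longrightarrow> card (R t) = (\<Sum>s\<in>{t..<m}. c s)"
proof (induction t)
  case 0
  then show ?case using card_P by (simp add: atLeast0LessThan)
next
  case (Suc t)
  then have split: "(\<Sum>s\<in>{t..<m}. c s) = c t + (\<Sum>s\<in>{Suc t..<m}. c s)"
    by (simp add: sum.atLeast_Suc_lessThan)
  with Suc have le: "c t \<le> card (R t)" by simp
  have "card (R (Suc t)) = card (R t) - c t"
    unfolding remaining_Suc chosen_def
    using card_Diff_subset[OF finite_subset lowest_subset] finite_remaining le card_lowest
    by (metis lowest_subset)
  then show ?case using Suc split by simp
qed

lemma c_le_card_remaining: "t < m \<Longrightarrow> c t \<le> card (R t)"
  using card_remaining[of t] by (simp add: sum.atLeast_Suc_lessThan)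

lemma
  assumes "t < m"
  shows chosen_subset: "S t \<subseteq> R t"
    and card_chosen: "card (S t) = c t"
    and chosen_le: "i \<in> S t \<Longrightarrow> j \<in> R (Suc t) \<Longrightarrow> x i t \<le> x j t"
  using lowest_subset[OF finite_remaining c_le_card_remaining[OF assms]]
    card_lowest[OF finite_remaining c_le_card_remaining[OF assms]]
    lowest_le[OF finite_remaining c_le_card_remaining[OF assms]]
  unfolding chosen_def remaining_Suc by simp_all

lemma finite_chosen: "t < m \<Longrightarrow> finite (S t)"
  using chosen_subset finite_remaining by (rule finite_subset)

lemma chosen_subset_P: "t < m \<Longrightarrow> S t \<subseteq> P"
  using chosen_subset remaining_antimono[of 0 t] by auto

lemma remaining_end: "R m = {}"
  using card_remaining[of m] finite_remaining by simp

lemma chosen_disjoint: "s < t \<Longrightarrow> t < m \<Longrightarrow> S s \<inter> S t = {}"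
  using chosen_subset[of t] remaining_antimono[of "Suc s" t] by (auto simp: remaining_Suc)

lemma in_some_chosen: "i \<in> P \<Longrightarrow> i \<notin> R t \<Longrightarrow> \<exists>s<t. i \<in> S s"
  by (induction t) (auto simp: remaining_Suc less_Suc_eq)

lemma part_index_eq: "t < m \<Longrightarrow> i \<in> S t \<Longrightarrow> part_index x c P i = t"
  unfolding part_index_def
proof (rule Least_equality)
  show "t \<le> s" if "t < m" "i \<in> S t" "i \<in> S s" for s
    using chosen_disjoint[of s t] that by (cases "s < t") auto
qed

lemma part_index: "i \<in> P \<Longrightarrow> part_index x c P i < m \<and> i \<in> S (part_index x c P i)"
proof -
  assume "i \<in> P"
  then obtain t where "t < m" "i \<in> S t"
    using in_some_chosen[of i m] remaining_end by blast
  then show ?thesis using part_index_eq by simp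
qed

end

locale greedy_split_valued = greedy_split +
  fixes F :: "'a \<Rightarrow> real \<Rightarrow> real" and \<alpha> :: "nat \<Rightarrow> real" and a b :: real
  assumes F_mono: "i \<in> P \<Longrightarrow> 0 \<le> y \<Longrightarrow> y \<le> z \<Longrightarrow> z \<le> 1 \<Longrightarrow> F i y \<le> F i z"
    and mono_\<alpha>: "mono \<alpha>"
    and a_b: "0 \<le> a" "a \<le> b" "b \<le> 1"
    and x_bounds: "i \<in> P \<Longrightarrow> t < m \<Longrightarrow> 0 \<le> x i t \<and> x i t \<le> b"
    and F_x: "i \<in> P \<Longrightarrow> t < m \<Longrightarrow> F i (x i t) = \<alpha> (Suc t)"
    and F_a: "i \<in> P \<Longrightarrow> F i a \<le> \<alpha> 0"
begin

abbreviation "B \<equiv> split_point x c P a"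

lemma split_point_Suc:
  assumes "t < m"
  shows "B (Suc t) \<in> insert (B t) ((\<lambda>i. x i t) ` S t)"
    and "B t \<le> B (Suc t)"
    and "i \<in> S t \<Longrightarrow> x i t \<le> B (Suc t)"
  using finite_chosen[OF assms] Max_in[of "insert (B t) ((\<lambda>i. x i t) ` S t)"]
  by (auto intro: Max_ge)

lemma split_point_bounds: "t \<le> m \<Longrightarrow> a \<le> B t \<and> B t \<le> b"
proof (induction t)
  case (Suc t)
  then have t: "t < m" by simp
  have "x i t \<le> b" if "i \<in> S t" for i
    using x_bounds[OF _ t] chosen_subset_P[OF t] that by blast
  then have "B (Suc t) \<le> b"
    using split_point_Suc(1)[OF t] Suc by auto
  then show ?case using split_point_Suc(2)[OF t] Suc by simp
qed (use a_b in simp)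

lemma split_point_in: "t \<le> m \<Longrightarrow> B t \<in> insert a {x i s |i s. i \<in> P \<and> s < m}"
proof (induction t)
  case (Suc t)
  then have t: "t < m" by simp
  show ?case
    using split_point_Suc(1)[OF t] Suc chosen_subset_P[OF t] t by auto
qed simp

text \<open>A player not served by step \<open>t\<close> has her \<open>t\<close>-th cut to the right of the cuts of the
  players served at step \<open>t\<close>, hence to the right of the new split point.\<close>

lemma remaining_below: "t \<le> m \<Longrightarrow> j \<in> R t \<Longrightarrow> F j (B t) \<le> \<alpha> t"
proof (induction t arbitrary: j)
  case 0
  then show ?case using F_a by simp
next
  case (Suc t)
  then have t: "t < m" and j: "j \<in> R t" "j \<in> P"
    using remaining_antimono[of 0 "Suc t"] by (auto simp: remaining_Suc)
  from split_point_Suc(1)[OF t] consider "B (Suc t) = B t" | i where "i \<in> S t" "B (Suc t) = x i t"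
    by auto
  then show ?case
  proof cases
    case 1
    then show ?thesis using Suc.IH[OF _ j(1)] t mono_\<alpha> by (auto dest: monoD[of _ t "Suc t"])
  next
    case 2
    then have "x i t \<le> x j t" "0 \<le> x i t" "x j t \<le> 1"
      using chosen_le[OF t] Suc.prems x_bounds[OF j(2) t] x_bounds chosen_subset_P[OF t] a_b
      by auto
    then show ?thesis using 2 F_mono[OF j(2)] F_x[OF j(2) t] by fastforce
  qed
qed

lemma chosen_above: "t < m \<Longrightarrow> i \<in> S t \<Longrightarrow> \<alpha> (Suc t) \<le> F i (B (Suc t))"
  using F_x[of i t] F_mono[of i "x i t" "B (Suc t)"] split_point_Suc(3)[of t i]
    x_bounds[of i t] split_point_bounds[of "Suc t"] chosen_subset_P[of t] a_b by auto

end

section \<open>Transcripts and interval allocations\<close>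

lemma length_transcript [simp]: "length (transcript Q ans r) = r"
  by (induction r) (auto simp: Let_def)

lemma take_transcript: "r \<le> k \<Longrightarrow> take r (transcript Q ans k) = transcript Q ans r"
  by (induction k) (auto simp: Let_def le_Suc_eq)

lemma nth_transcript: "r < k \<Longrightarrow> transcript Q ans k ! r = map ans (Q (transcript Q ans r))"
  by (induction k) (auto simp: Let_def nth_append less_Suc_eq)

lemma answers_subset_cut_points:
  assumes cuts: "\<And>h q. q \<in> set (Q h) \<Longrightarrow> is_cut q" and "r < k"
  shows "set (transcript Q ans k ! r) \<subseteq> cut_points Q (transcript Q ans k)"
proof
  fix y assume "y \<in> set (transcript Q ans k ! r)"
  then obtain q where q: "q \<in> set (Q (transcript Q ans r))" "y = ans q"
    using nth_transcript[OF \<open>r < k\<close>] by auto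
  then have "(q, y) \<in> set (zip (Q (take r (transcript Q ans k))) (transcript Q ans k ! r))"
    using \<open>r < k\<close> by (force simp: take_transcript nth_transcript in_set_zip in_set_conv_nth)
  then show "y \<in> cut_points Q (transcript Q ans k)"
    unfolding cut_points_def using cuts q(1) \<open>r < k\<close> by auto
qed

lemma valid_run_of_cut_queries:
  assumes "\<And>h q. q \<in> set (Q h) \<Longrightarrow> \<exists>i \<alpha>. q = Cut i \<alpha> \<and> i < n \<and> 0 \<le> \<alpha> \<and> \<alpha> \<le> 1"
  shows "valid_run n k Q vs"
  unfolding valid_run_def Let_def using assms by fastforce

lemma num_queries_const:
  assumes "\<And>h. length (Q h) = N"
  shows "num_queries k Q vs = k * N"
  unfolding num_queries_def assms by simp

lemma bij_betw_of_singleton_fibres: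
  assumes fibres: "\<And>G. card {i. i < n \<and> g i = G} = (if G < n then 1 else 0)"
  shows "bij_betw g {..<n} {..<(n::nat)}"
proof -
  have fibre: "{i. i < n \<and> g i = G} = {a}" if "G < n" "a < n" "g a = G" for G a
  proof -
    have "card {i. i < n \<and> g i = G} = 1" using fibres[of G] that(1) by simp
    then obtain b where "{i. i < n \<and> g i = G} = {b}" by (rule card_1_singletonE)
    moreover have "a \<in> {i. i < n \<and> g i = G}" using that by simp
    ultimately show ?thesis by simp
  qed
  have lt: "g i < n" if "i < n" for i
  proof (rule ccontr)
    assume "\<not> g i < n"
    then have "card {i'. i' < n \<and> g i' = g i} = 0" using fibres[of "g i"] by simp
    moreover have "finite {i'. i' < n \<and> g i' = g i}" by simp
    ultimately show False using that by auto
  qed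
  have "inj_on g {..<n}"
  proof (rule inj_onI)
    fix i j assume "i \<in> {..<n}" "j \<in> {..<n}" "g i = g j"
    then have "j \<in> {i'. i' < n \<and> g i' = g i}" by simp
    moreover have "{i'. i' < n \<and> g i' = g i} = {i}"
      using fibre[of "g i" i] lt \<open>i \<in> {..<n}\<close> by simp
    ultimately show "i = j" by simp
  qed
  moreover have "g ` {..<n} \<subseteq> {..<n}" using lt by auto
  ultimately show ?thesis
    using card_image card_subset_eq[of "{..<n}" "g ` {..<n}"] by (simp add: bij_betw_def card_image)
qed

lemma UN_intervals_chain:
  fixes b :: "nat \<Rightarrow> real"
  assumes "mono b"
  shows "(\<Union>G<Suc N. {b G..b (Suc G)}) = {b 0..b (Suc N)}"
proof (induction N)
  case (Suc N)
  have "b 0 \<le> b (Suc N)" "b (Suc N) \<le> b (Suc (Suc N))" by (auto intro: monoD[OF assms])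
  then have "{b 0..b (Suc N)} \<union> {b (Suc N)..b (Suc (Suc N))} = {b 0..b (Suc (Suc N))}"
    by (simp add: ivl_disj_un_two_touch)
  then show ?case using Suc by (simp add: lessThan_Suc Un_commute)
qed (simp add: lessThan_Suc)

lemma proportional_interval_allocation_of_chain:
  fixes b :: "nat \<Rightarrow> real"
  assumes n: "1 \<le> n" and g: "bij_betw g {..<n} {..<n}"
    and b: "mono b" "b 0 = 0" "b n = 1" "\<And>j. b j \<in> C"
    and fair: "\<And>i. i < n \<Longrightarrow> 1 / real n \<le> integral {b (g i)..b (Suc (g i))} (vs i)"
  shows "proportional_interval_allocation n vs C (\<lambda>i. (b (g i), b (Suc (g i))))"
proof -
  have "(\<Union>i<n. {b (g i)..b (Suc (g i))}) = (\<Union>G\<in>g ` {..<n}. {b G..b (Suc G)})"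
    by (simp only: image_image)
  also have "\<dots> = (\<Union>G<n. {b G..b (Suc G)})"
    using bij_betw_imp_surj_on[OF g] by simp
  also have "\<dots> = {0..1}"
    using UN_intervals_chain[OF b(1), of "n - 1"] n b(2,3) by simp
  finally have cover: "(\<Union>i<n. {b (g i)..b (Suc (g i))}) = {0..1}" .
  have disjoint: "{b (g i)<..<b (Suc (g i))} \<inter> {b (g j)<..<b (Suc (g j))} = {}"
    if "i < n" "j < n" "i \<noteq> j" for i j
  proof -
    have "g i \<noteq> g j" using that bij_betw_imp_inj_on[OF g] by (simp add: inj_on_eq_iff)
    then consider "Suc (g i) \<le> g j" | "Suc (g j) \<le> g i" by linarith
    then have "b (Suc (g i)) \<le> b (g j) \<or> b (Suc (g j)) \<le> b (g i)"
      by cases (simp_all add: b(1) monoD)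
    then show ?thesis by auto
  qed
  have "b (g i) \<le> b (Suc (g i))" for i
    using b(1) by (simp add: monoD)
  then show ?thesis
    unfolding proportional_interval_allocation_def prod.sel
    using cover disjoint fair b(4) by simp
qed

lemma ceiling_root_bounds:
  fixes n k :: nat
  assumes "1 \<le> n" "1 \<le> k"
  defines "m \<equiv> nat \<lceil>real n powr (1 / real k)\<rceil>"
  shows "1 \<le> m" "n \<le> m ^ k" "real m \<le> 2 * real n powr (1 / real k)"
proof -
  define p where "p = real n powr (1 / real k)"
  have p: "1 \<le> p" unfolding p_def using assms by (intro ge_one_powr_ge_zero) auto
  have m: "p \<le> real m" "real m \<le> 2 * p" unfolding m_def p_def[symmetric] using p by linarith+
  then show "1 \<le> m" "real m \<le> 2 * real n powr (1 / real k)" using p p_def by auto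
  have "real n = p ^ k"
    unfolding p_def using assms by (simp add: powr_realpow[symmetric] powr_powr)
  also have "\<dots> \<le> real m ^ k" using m p by (intro power_mono) auto
  finally show "n \<le> m ^ k" by (simp flip: of_nat_power)
qed

section \<open>The protocol\<close>

locale rounds_protocol =
  fixes n m k :: nat
  assumes n_pos: "1 \<le> n" and m_pos: "1 \<le> m" and n_le: "n \<le> m ^ k"
begin

text \<open>After round \<open>r\<close>, group \<open>G\<close> is responsible for the shares
  \<open>level r G, \<dots>, level r (Suc G) - 1\<close> of the \<open>n\<close> shares of size \<open>1 / n\<close>.\<close>

definition level :: "nat \<Rightarrow> nat \<Rightarrow> nat" where
  "level r G = min n (G * m ^ (k - r))"

definition threshold :: "nat \<Rightarrow> nat \<Rightarrow> real" where
  "threshold r G = real (level r G) / real n"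

definition group_size :: "nat \<Rightarrow> nat \<Rightarrow> nat" where
  "group_size r G = level r (Suc G) - level r G"

definition subgroup_sizes :: "nat \<Rightarrow> nat \<Rightarrow> nat \<Rightarrow> nat" where
  "subgroup_sizes r G t = group_size (Suc r) (G * m + t)"

definition group_members :: "(nat \<Rightarrow> nat) \<Rightarrow> nat \<Rightarrow> nat set" where
  "group_members g G = {i. i < n \<and> g i = G}"

lemma level_mono: "G \<le> G' \<Longrightarrow> level r G \<le> level r G'"
  unfolding level_def by (simp add: min.coboundedI2 mult_le_mono1)

lemma level_le: "level r G \<le> n"
  by (simp add: level_def)

lemma level_Suc_mult: "r < k \<Longrightarrow> level (Suc r) (G * m) = level r G"
  by (simp add: level_def Suc_diff_Suc mult.assoc flip: power_Suc)

lemma level_last: "level k G = min n G"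
  by (simp add: level_def)

lemma level_first: "level 0 G = (if G = 0 then 0 else n)"
  using n_le order_trans[of n "m ^ k" "G * m ^ k"] by (auto simp: level_def)

lemma threshold_mono: "G \<le> G' \<Longrightarrow> threshold r G \<le> threshold r G'"
  unfolding threshold_def by (simp add: divide_right_mono level_mono)

lemma threshold_bounds: "0 \<le> threshold r G" "threshold r G \<le> 1"
  using level_le[of r G] n_pos by (auto simp: threshold_def)

lemma sum_group_size: "(\<Sum>t<d. group_size r (a + t)) = level r (a + d) - level r a"
proof (induction d)
  case (Suc d)
  have "level r a \<le> level r (a + d)" "level r (a + d) \<le> level r (Suc (a + d))"
    by (simp_all add: level_mono)
  then show ?case using Suc by (simp add: group_size_def)
qed simp

lemma sum_subgroup_sizes: "r < k \<Longrightarrow> (\<Sum>t<m. subgroup_sizes r G t) = group_size r G"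
  using sum_group_size[of "Suc r" "G * m" m] level_Suc_mult[of r G] level_Suc_mult[of r "Suc G"]
  by (simp add: subgroup_sizes_def group_size_def add.commute)

lemma finite_group_members: "finite (group_members g G)"
  by (simp add: group_members_def)

lemma index_decompose: obtains G t where "j = G * m + t" "t < m"
  using m_pos by (metis div_mult_mod_eq mod_less_divisor not_one_le_zero neq0_conv)

lemma index_div_mod [simp]: "t < m \<Longrightarrow> (G * m + t) div m = G" "t < m \<Longrightarrow> (G * m + t) mod m = t"
  by simp_all

lemma index_eq_iff: "t < m \<Longrightarrow> t' < m \<Longrightarrow> G * m + t = G' * m + t' \<longleftrightarrow> G = G' \<and> t = t'"
  by (metis index_div_mod)

definition refine :: "nat \<Rightarrow> (nat \<Rightarrow> nat \<Rightarrow> real) \<Rightarrow> (nat \<Rightarrow> nat) \<times> (nat \<Rightarrow> real)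
    \<Rightarrow> (nat \<Rightarrow> nat) \<times> (nat \<Rightarrow> real)" where
  "refine r x = (\<lambda>(g, L).
     (\<lambda>i. g i * m + part_index x (subgroup_sizes r (g i)) (group_members g (g i)) i,
      \<lambda>j. split_point x (subgroup_sizes r (j div m)) (group_members g (j div m)) (L (j div m)) (j mod m)))"

definition round_invariant :: "(nat \<Rightarrow> real \<Rightarrow> real) \<Rightarrow> nat \<Rightarrow> real set
    \<Rightarrow> (nat \<Rightarrow> nat) \<times> (nat \<Rightarrow> real) \<Rightarrow> bool" where
  "round_invariant vs r C = (\<lambda>(g, L).
     (\<forall>G. card (group_members g G) = group_size r G) \<and>
     (\<forall>i<n. prefix_value (vs i) (L (g i)) \<le> threshold r (g i) \<and>
            threshold r (Suc (g i)) \<le> prefix_value (vs i) (L (Suc (g i)))) \<and>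
     L 0 = 0 \<and> mono L \<and> (\<forall>j. 0 \<le> L j \<and> L j \<le> 1 \<and> L j \<in> C))"

context
  fixes vs r C g L x
  assumes valid: "valid_instance n vs" and inv: "round_invariant vs r C (g, L)" and r_lt: "r < k"
    and x_cut: "\<And>i t. i < n \<Longrightarrow> t < m \<Longrightarrow>
                  x i t = cut_point (vs i) (threshold (Suc r) (Suc (g i * m + t)))"
    and x_in: "\<And>i t. i < n \<Longrightarrow> t < m \<Longrightarrow> x i t \<in> C"
begin

lemma
  shows card_group_members: "card (group_members g G) = group_size r G"
    and below_left: "i < n \<Longrightarrow> prefix_value (vs i) (L (g i)) \<le> threshold r (g i)"
    and above_right: "i < n \<Longrightarrow> threshold r (Suc (g i)) \<le> prefix_value (vs i) (L (Suc (g i)))"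
    and L_0: "L 0 = 0" and mono_L: "mono L"
    and L_bounds: "0 \<le> L j" "L j \<le> 1" and L_in: "L j \<in> C"
  using inv by (auto simp: round_invariant_def)

lemma greedy_split_group:
  "greedy_split_valued x (subgroup_sizes r G) (group_members g G) m (\<lambda>i. prefix_value (vs i))
     (\<lambda>t. threshold (Suc r) (G * m + t)) (L G) (L (Suc G))"
proof unfold_locales
  show "finite (group_members g G)" by (rule finite_group_members)
  show "card (group_members g G) = (\<Sum>t<m. subgroup_sizes r G t)"
    using card_group_members sum_subgroup_sizes[OF r_lt] by simp
  show "0 \<le> L G" "L G \<le> L (Suc G)" "L (Suc G) \<le> 1"
    using L_bounds monoD[OF mono_L, of G "Suc G"] by auto
  show "mono (\<lambda>t. threshold (Suc r) (G * m + t))"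
    by (intro monoI threshold_mono) simp
next
  fix i and y z :: real assume "i \<in> group_members g G" "0 \<le> y" "y \<le> z" "z \<le> 1"
  then show "prefix_value (vs i) y \<le> prefix_value (vs i) z"
    using prefix_value_mono cake_density_of_valid_instance[OF valid] by (auto simp: group_members_def)
next
  fix i assume "i \<in> group_members g G"
  then show "prefix_value (vs i) (L G) \<le> threshold (Suc r) (G * m + 0)"
    using below_left r_lt by (auto simp: group_members_def threshold_def level_Suc_mult)
next
  fix i t assume i: "i \<in> group_members g G" and t: "t < m"
  then have i_lt: "i < n" and gi: "g i = G" by (auto simp: group_members_def)
  note v = cake_density_of_valid_instance[OF valid i_lt]
  have "threshold (Suc r) (Suc (G * m + t)) \<le> threshold (Suc r) (Suc G * m)"
    using t by (intro threshold_mono) simp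
  also have "\<dots> \<le> prefix_value (vs i) (L (Suc G))"
    using above_right[OF i_lt] gi level_Suc_mult[OF r_lt, of "Suc G"] by (simp add: threshold_def)
  finally have "x i t \<le> L (Suc G)"
    using x_cut[OF i_lt t] gi L_bounds threshold_bounds by (auto intro: cut_point_le[OF v])
  then show "0 \<le> x i t \<and> x i t \<le> L (Suc G)"
    using x_cut[OF i_lt t] cut_point_nonneg[OF v] threshold_bounds by simp
  show "prefix_value (vs i) (x i t) = threshold (Suc r) (G * m + Suc t)"
    using x_cut[OF i_lt t] prefix_value_cut_point[OF v] threshold_bounds gi by simp
qed

abbreviation "subgroup G \<equiv> chosen x (subgroup_sizes r G) (group_members g G)"
abbreviation "subgroup_index i \<equiv> part_index x (subgroup_sizes r (g i)) (group_members g (g i)) i"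
abbreviation "boundary G \<equiv> split_point x (subgroup_sizes r G) (group_members g G) (L G)"

lemma refine_simps:
  "fst (refine r x (g, L)) i = g i * m + subgroup_index i"
  "t < m \<Longrightarrow> snd (refine r x (g, L)) (G * m + t) = boundary G t"
  "snd (refine r x (g, L)) (Suc G * m) = L (Suc G)"
  using m_pos by (simp_all add: refine_def)

lemma subgroup_index:
  assumes "i < n"
  shows "subgroup_index i < m" "i \<in> subgroup (g i) (subgroup_index i)"
proof -
  interpret greedy_split_valued x "subgroup_sizes r (g i)" "group_members g (g i)" m
    "\<lambda>i. prefix_value (vs i)" "\<lambda>t. threshold (Suc r) (g i * m + t)" "L (g i)" "L (Suc (g i))"
    by (rule greedy_split_group)
  show "subgroup_index i < m" "i \<in> subgroup (g i) (subgroup_index i)"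
    using part_index assms by (simp_all add: group_members_def)
qed

lemma group_members_refine:
  assumes t: "t < m"
  shows "group_members (fst (refine r x (g, L))) (G * m + t) = subgroup G t"
proof -
  interpret greedy_split_valued x "subgroup_sizes r G" "group_members g G" m
    "\<lambda>i. prefix_value (vs i)" "\<lambda>t. threshold (Suc r) (G * m + t)" "L G" "L (Suc G)"
    by (rule greedy_split_group)
  show ?thesis
  proof (intro set_eqI iffI)
    fix i assume "i \<in> group_members (fst (refine r x (g, L))) (G * m + t)"
    then have i: "i < n" and "g i * m + subgroup_index i = G * m + t"
      by (simp_all add: group_members_def refine_simps)
    then have "g i = G \<and> subgroup_index i = t"
      using index_eq_iff[OF subgroup_index(1)[OF i] t] by blast
    then show "i \<in> subgroup G t" using subgroup_index(2)[OF i] by metis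
  next
    fix i assume i: "i \<in> subgroup G t"
    then have "i < n" "g i = G"
      using chosen_subset_P[OF t] by (auto simp: group_members_def)
    moreover have "part_index x (subgroup_sizes r G) (group_members g G) i = t"
      using part_index_eq[OF t i] .
    ultimately show "i \<in> group_members (fst (refine r x (g, L))) (G * m + t)"
      by (simp add: group_members_def refine_simps)
  qed
qed

lemma prefix_value_refine:
  assumes i: "i < n"
  defines "J \<equiv> fst (refine r x (g, L)) i"
  shows "prefix_value (vs i) (snd (refine r x (g, L)) J) \<le> threshold (Suc r) J"
    and "threshold (Suc r) (Suc J) \<le> prefix_value (vs i) (snd (refine r x (g, L)) (Suc J))"
proof -
  define G t where "G = g i" and "t = subgroup_index i"
  have t: "t < m" and i_in: "i \<in> subgroup G t"
    using subgroup_index[OF i] by (simp_all add: G_def t_def)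
  have J: "J = G * m + t" by (simp add: J_def G_def t_def refine_simps)
  interpret greedy_split_valued x "subgroup_sizes r G" "group_members g G" m
    "\<lambda>i. prefix_value (vs i)" "\<lambda>t. threshold (Suc r) (G * m + t)" "L G" "L (Suc G)"
    by (rule greedy_split_group)
  show "prefix_value (vs i) (snd (refine r x (g, L)) J) \<le> threshold (Suc r) J"
    using remaining_below[of t i] chosen_subset[OF t] i_in t by (auto simp: J refine_simps)
  show "threshold (Suc r) (Suc J) \<le> prefix_value (vs i) (snd (refine r x (g, L)) (Suc J))"
  proof (cases "Suc t < m")
    case True
    then show ?thesis using chosen_above[OF t i_in] refine_simps(2)[OF True, of G] by (simp add: J)
  next
    case False
    then have "Suc J = Suc G * m" using t J by simp
    then show ?thesis
      using above_right[OF i] level_Suc_mult[OF r_lt, of "Suc G"] refine_simps(3)[of G]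
      by (simp add: G_def threshold_def)
  qed
qed

lemma boundary_refine:
  assumes t: "t < m"
  defines "L' \<equiv> snd (refine r x (g, L))"
  shows "L' (G * m + t) \<le> L' (Suc (G * m + t))"
    and "0 \<le> L' (G * m + t)" "L' (G * m + t) \<le> 1" "L' (G * m + t) \<in> C"
proof -
  interpret greedy_split_valued x "subgroup_sizes r G" "group_members g G" m
    "\<lambda>i. prefix_value (vs i)" "\<lambda>t. threshold (Suc r) (G * m + t)" "L G" "L (Suc G)"
    by (rule greedy_split_group)
  have L': "L' (G * m + t) = boundary G t" using refine_simps(2)[OF t] by (simp add: L'_def)
  have between: "L G \<le> boundary G t" "boundary G t \<le> L (Suc G)"
    using split_point_bounds[of t] t by simp_all
  show "L' (G * m + t) \<le> L' (Suc (G * m + t))"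
  proof (cases "Suc t < m")
    case True
    then show ?thesis using split_point_Suc(2)[OF t] refine_simps(2)[OF True, of G] L' by (simp add: L'_def)
  next
    case False
    then have "Suc (G * m + t) = Suc G * m" using t by simp
    then have "L' (Suc (G * m + t)) = L (Suc G)"
      unfolding L'_def by (simp only: refine_simps(3))
    then show ?thesis using between L' by simp
  qed
  show "0 \<le> L' (G * m + t)" "L' (G * m + t) \<le> 1"
    using between L_bounds[of G] L_bounds[of "Suc G"] L' by simp_all
  have "x i s \<in> C" if "i \<in> group_members g G" "s < m" for i s
    using x_in that by (simp add: group_members_def)
  then show "L' (G * m + t) \<in> C"
    using split_point_in[of t] t L_in[of G] L' by auto
qed

lemma round_invariant_refine: "round_invariant vs (Suc r) C (refine r x (g, L))"
proof -
  obtain g' L' where gL': "refine r x (g, L) = (g', L')" by fastforce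
  have "card (group_members g' J) = group_size (Suc r) J" for J
  proof (rule index_decompose[of J])
    fix G t assume "J = G * m + t" "t < m"
    then show ?thesis
      using group_members_refine greedy_split.card_chosen[OF greedy_split_valued.axioms(1)[OF greedy_split_group]]
        gL' by (simp add: subgroup_sizes_def)
  qed
  moreover have "L' j \<le> L' (Suc j) \<and> 0 \<le> L' j \<and> L' j \<le> 1 \<and> L' j \<in> C" for j
    by (rule index_decompose[of j]) (use boundary_refine gL' in simp)
  moreover have "L' 0 = 0"
    using refine_simps(2)[of 0 0] m_pos gL' L_0 by simp
  ultimately show ?thesis
    using prefix_value_refine gL' by (simp add: round_invariant_def mono_iff_le_Suc)
qed

end

lemma round_invariant_initial:
  assumes valid: "valid_instance n vs" and C: "0 \<in> C" "1 \<in> C"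
  shows "round_invariant vs 0 C (\<lambda>i. 0, \<lambda>j. if j = 0 then 0 else 1)"
proof -
  have "card (group_members (\<lambda>i. 0) G) = group_size 0 G" for G
    by (simp add: group_members_def group_size_def level_first)
  moreover have "threshold 0 0 = 0" "threshold 0 1 = 1"
    using n_pos by (simp_all add: threshold_def level_first)
  moreover have "mono (\<lambda>j::nat. if j = 0 then 0 else 1 :: real)"
    by (simp add: mono_iff_le_Suc)
  ultimately show ?thesis
    using C prefix_value_one cake_density_of_valid_instance[OF valid]
    by (simp add: round_invariant_def prefix_value_def)
qed

lemma allocation_of_final_invariant:
  assumes valid: "valid_instance n vs" and inv: "round_invariant vs k C (g, L)" and "1 \<in> C"
  defines "b \<equiv> \<lambda>j. if n \<le> j then 1 else L j"
  shows "proportional_interval_allocation n vs C (\<lambda>i. (b (g i), b (Suc (g i))))"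
proof (rule proportional_interval_allocation_of_chain[OF n_pos])
  have L: "L 0 = 0" "mono L" "0 \<le> L j" "L j \<le> 1" "L j \<in> C" for j
    using inv by (simp_all add: round_invariant_def)
  have bounds: "prefix_value (vs i) (L (g i)) \<le> threshold k (g i)"
    "threshold k (Suc (g i)) \<le> prefix_value (vs i) (L (Suc (g i)))" if "i < n" for i
    using inv that by (simp_all add: round_invariant_def)
  have "card {i. i < n \<and> g i = G} = (if G < n then 1 else 0)" for G
    using inv by (simp add: round_invariant_def group_members_def group_size_def level_last)
  then show "bij_betw g {..<n} {..<n}" by (rule bij_betw_of_singleton_fibres)
  show mono_b: "mono b"
    unfolding mono_iff_le_Suc b_def using L(4) incseq_SucD[OF L(2)] by auto
  show "b 0 = 0" "b n = 1" "b j \<in> C" for j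
    using n_pos L \<open>1 \<in> C\<close> by (simp_all add: b_def)
  fix i assume i: "i < n"
  then have G: "g i < n" using \<open>bij_betw g {..<n} {..<n}\<close> by (auto dest: bij_betw_apply)
  note v = cake_density_of_valid_instance[OF valid i]
  have b01: "0 \<le> b j" "b j \<le> 1" for j using L by (simp_all add: b_def)
  have left: "prefix_value (vs i) (b (g i)) \<le> real (g i) / real n"
    using bounds(1)[OF i] G by (simp add: b_def threshold_def level_last)
  have right: "real (Suc (g i)) / real n \<le> prefix_value (vs i) (b (Suc (g i)))"
  proof (cases "Suc (g i) = n")
    case True
    then show ?thesis using prefix_value_one[OF v] n_pos by (simp add: b_def)
  next
    case False
    then show ?thesis using bounds(2)[OF i] G by (simp add: b_def threshold_def level_last)
  qed
  have "integral {b (g i)..b (Suc (g i))} (vs i)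
      = prefix_value (vs i) (b (Suc (g i))) - prefix_value (vs i) (b (g i))"
    using integral_eq_prefix_value_diff[OF v b01(1) _ b01(2)] monoD[OF mono_b, of "g i" "Suc (g i)"] by simp
  also have "\<dots> \<ge> real (Suc (g i)) / real n - real (g i) / real n"
    using left right by linarith
  finally show "1 / real n \<le> integral {b (g i)..b (Suc (g i))} (vs i)"
    by (simp add: diff_divide_distrib[symmetric])
qed

primrec round_state :: "nat \<Rightarrow> history \<Rightarrow> (nat \<Rightarrow> nat) \<times> (nat \<Rightarrow> real)" where
  "round_state 0 h = (\<lambda>i. 0, \<lambda>j. if j = 0 then 0 else 1)"
| "round_state (Suc r) h = refine r (\<lambda>i t. h ! r ! (i * m + t)) (round_state r h)"

text \<open>Query \<open>i * m + t\<close> asks player \<open>i\<close> for the right end of the \<open>t\<close>-th sub-block of her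
  group.\<close>

definition protocol_queries :: query_fn where
  "protocol_queries h = map (\<lambda>p. Cut (p div m)
     (threshold (Suc (length h)) (Suc (fst (round_state (length h) h) (p div m) * m + p mod m)))) [0..<n * m]"

text \<open>The last player is only known to value \<open>[0, L n]\<close> fully, so her interval is extended
  to the end of the cake.\<close>

definition final_boundary :: "history \<Rightarrow> nat \<Rightarrow> real" where
  "final_boundary h j = (if n \<le> j then 1 else snd (round_state k h) j)"

definition protocol_output :: output_fn where
  "protocol_output h i =
     (final_boundary h (fst (round_state k h) i), final_boundary h (Suc (fst (round_state k h) i)))"

lemma round_state_cong: "(\<And>j. j < r \<Longrightarrow> h ! j = h' ! j) \<Longrightarrow> round_state r h = round_state r h'"
  by (induction r) auto

lemma round_state_take: "r \<le> length h \<Longrightarrow> round_state r (take r h) = round_state r h"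
  by (rule round_state_cong) simp

lemma length_protocol_queries: "length (protocol_queries h) = n * m"
  by (simp add: protocol_queries_def)

lemma query_index_less:
  assumes "i < n" "t < m"
  shows "i * m + t < n * m"
proof -
  have "i * m + t < Suc i * m" using assms by simp
  also have "\<dots> \<le> n * m" using assms by (intro mult_le_mono1) simp
  finally show ?thesis .
qed

lemma protocol_queries_nth:
  assumes "i < n" "t < m"
  shows "protocol_queries h ! (i * m + t) =
    Cut i (threshold (Suc (length h)) (Suc (fst (round_state (length h) h) i * m + t)))"
  using assms query_index_less[OF assms] by (simp add: protocol_queries_def)

lemma protocol_queries_cuts:
  "q \<in> set (protocol_queries h) \<Longrightarrow> \<exists>i \<alpha>. q = Cut i \<alpha> \<and> i < n \<and> 0 \<le> \<alpha> \<and> \<alpha> \<le> 1"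
  using threshold_bounds by (auto simp: protocol_queries_def less_mult_imp_div_less)

lemma round_invariant_round_state:
  assumes valid: "valid_instance n vs" and "r \<le> k"
  defines "H \<equiv> transcript protocol_queries (answer vs) k"
  shows "round_invariant vs r (cut_points protocol_queries H) (round_state r H)"
  using \<open>r \<le> k\<close>
proof (induction r)
  case 0
  show ?case using round_invariant_initial[OF valid] by (simp add: cut_points_def)
next
  case (Suc r)
  then have r: "r < k" by simp
  obtain g L where gL: "round_state r H = (g, L)" by fastforce
  have H_r: "H ! r = map (answer vs) (protocol_queries (transcript protocol_queries (answer vs) r))"
    unfolding H_def by (rule nth_transcript[OF r])
  have "round_state r (transcript protocol_queries (answer vs) r) = (g, L)"
    using round_state_take[of r H] take_transcript[of r k] r gL by (simp add: H_def)
  then have "H ! r ! (i * m + t) = cut_point (vs i) (threshold (Suc r) (Suc (g i * m + t)))"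
    if "i < n" "t < m" for i t
    using H_r protocol_queries_nth[OF that] query_index_less[OF that]
    by (simp add: length_protocol_queries)
  moreover have "H ! r ! (i * m + t) \<in> cut_points protocol_queries H" if "i < n" "t < m" for i t
  proof -
    have "H ! r ! (i * m + t) \<in> set (H ! r)"
      using H_r query_index_less[OF that] by (simp add: length_protocol_queries)
    moreover have "is_cut q" if "q \<in> set (protocol_queries h)" for q h
      using protocol_queries_cuts[OF that] by auto
    ultimately show ?thesis
      using answers_subset_cut_points[of protocol_queries r k "answer vs"] r by (auto simp: H_def)
  qed
  moreover have "round_invariant vs r (cut_points protocol_queries H) (g, L)"
    using Suc.IH r gL by simp
  ultimately show ?case
    using round_invariant_refine[OF valid _ r] gL by simp
qed

theorem protocol_correct:
  assumes valid: "valid_instance n vs"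
  defines "H \<equiv> transcript protocol_queries (answer vs) k"
  shows "valid_run n k protocol_queries vs"
    and "num_queries k protocol_queries vs = k * (n * m)"
    and "proportional_interval_allocation n vs (cut_points protocol_queries H) (protocol_output H)"
proof -
  show "valid_run n k protocol_queries vs"
    using protocol_queries_cuts by (rule valid_run_of_cut_queries)
  show "num_queries k protocol_queries vs = k * (n * m)"
    using length_protocol_queries by (rule num_queries_const)
  obtain g L where gL: "round_state k H = (g, L)" by fastforce
  have "round_invariant vs k (cut_points protocol_queries H) (g, L)"
    using round_invariant_round_state[OF valid order.refl] gL by (simp add: H_def)
  moreover have "1 \<in> cut_points protocol_queries H" by (simp add: cut_points_def)
  moreover have "protocol_output H = (\<lambda>i. (final_boundary H (g i), final_boundary H (Suc (g i))))"
    by (simp add: protocol_output_def gL fun_eq_iff)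
  moreover have "final_boundary H = (\<lambda>j. if n \<le> j then 1 else L j)"
    by (simp add: final_boundary_def gL fun_eq_iff)
  ultimately show "proportional_interval_allocation n vs (cut_points protocol_queries H) (protocol_output H)"
    using allocation_of_final_invariant[OF valid] by simp
qed

end

theorem proposition14:
  shows "\<exists>C::real. \<forall>n k::nat. 1 \<le> n \<longrightarrow> 1 \<le> k \<longrightarrow>
    (\<exists>(Q::query_fn) (Out::output_fn). \<forall>vs. valid_instance n vs \<longrightarrow>
       (let h = transcript Q (answer vs) k in
          valid_run n k Q vs \<and>
          real (num_queries k Q vs) \<le> C * real k * real n powr (1 + 1 / real k) \<and>
          proportional_interval_allocation n vs (cut_points Q h) (Out h)))"
proof (intro exI[of _ 2] allI impI)
  fix n k :: nat
  assume n: "1 \<le> n" and k: "1 \<le> k"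
  define m where "m = nat \<lceil>real n powr (1 / real k)\<rceil>"
  note m = ceiling_root_bounds[OF n k, folded m_def]
  interpret rounds_protocol n m k
    using n m by unfold_locales
  have "real (k * (n * m)) \<le> real k * real n * (2 * real n powr (1 / real k))"
    using m(3) by (simp add: mult.assoc mult_left_mono)
  also have "\<dots> = 2 * real k * real n powr (1 + 1 / real k)"
    using n by (simp add: powr_add)
  finally have cost: "real (k * (n * m)) \<le> 2 * real k * real n powr (1 + 1 / real k)" .
  show "\<exists>Q Out. \<forall>vs. valid_instance n vs \<longrightarrow>
       (let h = transcript Q (answer vs) k in
          valid_run n k Q vs \<and>
          real (num_queries k Q vs) \<le> 2 * real k * real n powr (1 + 1 / real k) \<and>
          proportional_interval_allocation n vs (cut_points Q h) (Out h))"
    using protocol_correct cost by (intro exI[of _ protocol_queries] exI[of _ protocol_output]) simp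
qed

end
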